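(* Let $P$ be a finite poset and $\mathcal{F}\subseteq\mathrm{Hom}(P,\mathbb{N})$ a poset filter. The family of ascents $\{\Lambda\phi:\phi\in\mathcal{F}\}$ has a finite set of inclusion-minimal elements.
   Context: $\mathbb{N}=\{0,1,2,\dots\}$; $\mathrm{Hom}(P,\mathbb{N})$ is the set of isotone maps $P\to\mathbb{N}$ ordered pointwise; a filter is an up-closed subset. The ascent of $\phi$ is $\Lambda\phi=\{(p,i)\in P\times\mathbb{N}:\phi(q)\le i<\phi(p)\text{ for all }q<p\}$. *)

theory Defs
  imports Main
begin

definition Hom :: "('a::order \<Rightarrow> nat) set" where
  "Hom = {\<phi>. mono \<phi>}"

definition hom_filter :: "('a::order \<Rightarrow> nat) set \<Rightarrow> bool" where
  "hom_filter F \<longleftrightarrow> F \<subseteq> Hom \<and> (\<forall>\<phi>\<in>F. \<forall>\<psi>\<in>Hom. \<phi> \<le> \<psi> \<longrightarrow> \<psi> \<in> F)"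

definition ascent :: "('a::order \<Rightarrow> nat) \<Rightarrow> ('a \<times> nat) set" where
  "ascent \<phi> = {(p, i). i < \<phi> p \<and> (\<forall>q. q < p \<longrightarrow> \<phi> q \<le> i)}"

definition min_elems :: "'b set set \<Rightarrow> 'b set set" where
  "min_elems S = {A \<in> S. \<not> (\<exists>B\<in>S. B \<subset> A)}"

end

theory Submission
  imports Defs
begin

text \<open>By Dickson's lemma the filter has a finite set of generators; let C bound their values.
  Truncating any member \<phi> of the filter at C keeps it in the filter (it still dominates a
  generator) and can only shrink its ascent. Hence every minimal ascent is the ascent of a
  C-bounded map, and there are only finitely many of those.\<close>

lemma finite_dominating_subset:
  fixes F :: "('a \<Rightarrow> nat) set"
  assumes "finite D"
  shows "\<exists>G. finite G \<and> G \<subseteq> F \<and> (\<forall>\<phi>\<in>F. \<exists>\<gamma>\<in>G. \<forall>x\<in>D. \<gamma> x \<le> \<phi> x)"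
  using assms
proof (induction D arbitrary: F rule: finite_induct)
  case empty
  show ?case
  proof (cases "F = {}")
    case False
    then obtain \<phi> where "\<phi> \<in> F" by blast
    then show ?thesis by (intro exI[of _ "{\<phi>}"]) auto
  qed (intro exI[of _ "{}"], simp)
next
  case (insert a D)
  obtain G0 where G0: "finite G0" "G0 \<subseteq> F" "\<forall>\<phi>\<in>F. \<exists>\<gamma>\<in>G0. \<forall>x\<in>D. \<gamma> x \<le> \<phi> x"
    using insert.IH[of F] by blast
  have "\<forall>j. \<exists>G. finite G \<and> G \<subseteq> {\<phi>\<in>F. \<phi> a = j} \<and>
      (\<forall>\<phi>\<in>{\<phi>\<in>F. \<phi> a = j}. \<exists>\<gamma>\<in>G. \<forall>x\<in>D. \<gamma> x \<le> \<phi> x)"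
    by (intro allI insert.IH)
  then obtain Gj where "\<forall>j. finite (Gj j) \<and> Gj j \<subseteq> {\<phi>\<in>F. \<phi> a = j} \<and>
      (\<forall>\<phi>\<in>{\<phi>\<in>F. \<phi> a = j}. \<exists>\<gamma>\<in>Gj j. \<forall>x\<in>D. \<gamma> x \<le> \<phi> x)"
    by (rule choice[THEN exE]) blast
  note Gj = this[rule_format]
  define k where "k = Max (insert 0 ((\<lambda>\<gamma>. \<gamma> a) ` G0))"
  have k: "\<gamma> a \<le> k" if "\<gamma> \<in> G0" for \<gamma>
    unfolding k_def using G0(1) that by (intro Max_ge) auto
  \<comment> \<open>G0 serves every \<phi> with \<phi> a \<ge> k; each of the finitely many smaller values
      of \<phi> a gets its own basis\<close>
  define G where "G = G0 \<union> (\<Union>j\<le>k. Gj j)"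
  have "\<exists>\<gamma>\<in>G. \<forall>x\<in>insert a D. \<gamma> x \<le> \<phi> x" if \<phi>: "\<phi> \<in> F" for \<phi>
  proof (cases "k \<le> \<phi> a")
    case True
    then obtain \<gamma> where "\<gamma> \<in> G0" "\<forall>x\<in>D. \<gamma> x \<le> \<phi> x"
      using G0(3) \<phi> by blast
    with k[of \<gamma>] True show ?thesis
      unfolding G_def by (intro bexI[of _ \<gamma>]) auto
  next
    case False
    then obtain \<gamma> where "\<gamma> \<in> Gj (\<phi> a)" "\<forall>x\<in>D. \<gamma> x \<le> \<phi> x"
      using Gj[of "\<phi> a"] \<phi> by blast
    with Gj[of "\<phi> a"] False show ?thesis
      unfolding G_def by (intro bexI[of _ \<gamma>]) auto
  qed
  moreover have "finite G" "G \<subseteq> F"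
    unfolding G_def using G0 Gj by blast+
  ultimately show ?case by blast
qed

lemma mono_min_const: "mono \<phi> \<Longrightarrow> mono (\<lambda>x. min (\<phi> x) (C::nat))"
  unfolding mono_def by (auto intro: min.coboundedI1)

lemma ascent_min_const_subset: "ascent (\<lambda>x. min (\<phi> x) C) \<subseteq> ascent \<phi>"
proof
  fix z assume "z \<in> ascent (\<lambda>x. min (\<phi> x) C)"
  then obtain p i where z: "z = (p, i)" "i < min (\<phi> p) C" "\<forall>q. q < p \<longrightarrow> min (\<phi> q) C \<le> i"
    unfolding ascent_def by blast
  \<comment> \<open>since i < C, the bound min (\<phi> q) C \<le> i forces \<phi> q \<le> i\<close>
  then have "\<forall>q. q < p \<longrightarrow> \<phi> q \<le> i"
    by (metis min_le_iff_disj not_le)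
  with z show "z \<in> ascent \<phi>"
    unfolding ascent_def by simp
qed

lemma hom_filter_min_const_mem:
  assumes "hom_filter F" "\<phi> \<in> F" "\<gamma> \<in> F" "\<gamma> \<le> \<phi>" "\<And>x. \<gamma> x \<le> C"
  shows "(\<lambda>x. min (\<phi> x) C) \<in> F"
proof -
  have "mono \<phi>"
    using assms(1,2) unfolding hom_filter_def Hom_def by blast
  then have "(\<lambda>x. min (\<phi> x) C) \<in> Hom"
    unfolding Hom_def by (simp add: mono_min_const)
  moreover have "\<gamma> \<le> (\<lambda>x. min (\<phi> x) C)"
    using assms(4,5) by (simp add: le_fun_def)
  ultimately show ?thesis
    using assms(1,3) unfolding hom_filter_def by blast
qed

lemma min_elems_subset:
  assumes "T \<subseteq> S" "\<And>A. A \<in> S \<Longrightarrow> \<exists>B\<in>T. B \<subseteq> A"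
  shows "min_elems S \<subseteq> T"
proof
  fix A assume "A \<in> min_elems S"
  then have "A \<in> S" "\<And>B. B \<in> S \<Longrightarrow> \<not> B \<subset> A"
    unfolding min_elems_def by auto
  moreover obtain B where "B \<in> T" "B \<subseteq> A"
    using assms(2) \<open>A \<in> S\<close> by blast
  ultimately show "A \<in> T"
    using assms(1) by auto
qed

lemma finite_bounded_funs: "finite {f :: 'a::finite \<Rightarrow> nat. \<forall>x. f x \<le> C}"
proof -
  have "finite {f :: 'a \<Rightarrow> nat. \<forall>x. (x \<in> UNIV \<longrightarrow> f x \<in> {..C}) \<and> (x \<notin> UNIV \<longrightarrow> f x = 0)}"
    by (rule finite_set_of_finite_funs) auto
  then show ?thesis by simp
qed

theorem lemma1p5:
  fixes F :: "('a::{order,finite} \<Rightarrow> nat) set"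
  assumes "hom_filter F"
  shows "finite (min_elems (ascent ` F))"
proof -
  obtain G where G: "finite G" "G \<subseteq> F" "\<forall>\<phi>\<in>F. \<exists>\<gamma>\<in>G. \<forall>x. \<gamma> x \<le> \<phi> x"
    using finite_dominating_subset[of "UNIV :: 'a set" F] by auto
  define C where "C = Max (insert 0 ((\<lambda>(\<gamma>, x). \<gamma> x) ` (G \<times> UNIV)))"
  have C: "\<gamma> x \<le> C" if "\<gamma> \<in> G" for \<gamma> x
    unfolding C_def using G(1) that by (intro Max_ge) force+
  define B where "B = {\<psi> \<in> F. \<forall>x. \<psi> x \<le> C}"
  have "\<exists>A\<in>ascent ` B. A \<subseteq> ascent \<phi>" if "\<phi> \<in> F" for \<phi>
  proof -
    obtain \<gamma> where "\<gamma> \<in> G" "\<gamma> \<le> \<phi>"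
      using G(3) \<open>\<phi> \<in> F\<close> by (auto simp: le_fun_def)
    then have "(\<lambda>x. min (\<phi> x) C) \<in> B"
      using hom_filter_min_const_mem[OF assms \<open>\<phi> \<in> F\<close>] C G(2) by (auto simp: B_def)
    then show ?thesis
      using ascent_min_const_subset by blast
  qed
  then have "min_elems (ascent ` F) \<subseteq> ascent ` B"
    by (intro min_elems_subset) (auto simp: B_def)
  moreover have "finite B"
    unfolding B_def using finite_bounded_funs[of C] by (rule rev_finite_subset) auto
  ultimately show ?thesis
    using finite_subset by blast
qed

end
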